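(* Let $\mathbf{H}$ be a Heyting algebra with canonical frame $(X,\perp,Y,T)$. Then the lattice $\mathcal G(X)$ of stable sets of filters is a complete Heyting algebra and a canonical extension of $\mathbf H$, with $\mathbf H$ identified (via $a\mapsto X_a=\{x\in X:a\in x\}$) with the subalgebra $\mathrm{KO}\mathcal G(X)$ of compact-open stable sets. Its implication, the residual of intersection, is given by $A\Rightarrow C=\{u\in X:\forall z\in X\,(z\in A\text{ and }u\le z\text{ imply }z\in C)\}$, and this coincides with $A\Rightarrow_T C=\{u\in X:\forall x\in X\,\forall y\in Y\,(x\in A\text{ and }C\perp y\text{ imply }uT'xy)\}$.
   Context: The canonical frame of $\mathbf H$: $X$ is the set of filters of $\mathbf H$, $Y$ the set of ideals, $x\perp y$ iff $x\cap y\neq\emptyset$; for $x\in X,v\in Y$, $x\leadsto v$ is the ideal generated by $\{a\to b:a\in x,b\in v\}$, and $yTxv$ iff $x\leadsto v\subseteq y$. For $U\subseteq X$, $U'=\{y:\forall x\in U\ x\perp y\}$; for $V\subseteq Y$, ${}'V=\{x:\forall y\in V\ x\perp y\}$; $A\subseteq X$ is stable if $A={}'(A')$; $\mathcal G(X)$ is the complete lattice of stable sets (meet is intersection, join is closure of union). $u\le z$ on $X$ iff $\{u\}'\subseteq\{z\}'$ (i.e. $u\subseteq z$ as filters). $C\perp y$ means $c\perp y$ for all $c\in C$. $uT'xy$ iff $\forall v\in Y(vTxy\Rightarrow u\perp v)$. $X$ carries the topology generated by the basis $\{X_a:a\in H\}$; $\mathrm{KO}\mathcal G(X)$ is the set of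 stable sets compact and open in this topology. Canonical extension is in the sense of Gehrke–Harding. *)

theory Defs
  imports "HOL-Analysis.Analysis"
begin

definition heyting_alg :: "('a::bounded_lattice \<Rightarrow> 'a \<Rightarrow> 'a) \<Rightarrow> bool" where
  "heyting_alg imp \<longleftrightarrow> (\<forall>a b c. inf a b \<le> c \<longleftrightarrow> a \<le> imp b c)"

section \<open>Filters and ideals (improper ones included)\<close>

definition is_filter :: "'a::bounded_lattice set \<Rightarrow> bool" where
  "is_filter F \<longleftrightarrow> F \<noteq> {} \<and> (\<forall>a\<in>F. \<forall>b. a \<le> b \<longrightarrow> b \<in> F) \<and> (\<forall>a\<in>F. \<forall>b\<in>F. inf a b \<in> F)"

definition is_ideal :: "'a::bounded_lattice set \<Rightarrow> bool" where
  "is_ideal I \<longleftrightarrow> I \<noteq> {} \<and> (\<forall>a\<in>I. \<forall>b. b \<le> a \<longrightarrow> b \<in> I) \<and> (\<forall>a\<in>I. \<forall>b\<in>I. sup a b \<in> I)"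

definition filtersX :: "'a::bounded_lattice set set" where
  "filtersX = {F. is_filter F}"

definition idealsY :: "'a::bounded_lattice set set" where
  "idealsY = {I. is_ideal I}"

definition ideal_gen :: "'a::bounded_lattice set \<Rightarrow> 'a set" where
  "ideal_gen S = \<Inter>{I. is_ideal I \<and> S \<subseteq> I}"

definition perp :: "'a set \<Rightarrow> 'a set \<Rightarrow> bool" where
  "perp x y \<longleftrightarrow> x \<inter> y \<noteq> {}"

definition leadsto :: "('a::bounded_lattice \<Rightarrow> 'a \<Rightarrow> 'a) \<Rightarrow> 'a set \<Rightarrow> 'a set \<Rightarrow> 'a set" where
  "leadsto imp x v = ideal_gen {imp a b | a b. a \<in> x \<and> b \<in> v}"

text \<open>\<open>relT imp y x v\<close> is \<open>yTxv\<close>.\<close>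
definition relT :: "('a::bounded_lattice \<Rightarrow> 'a \<Rightarrow> 'a) \<Rightarrow> 'a set \<Rightarrow> 'a set \<Rightarrow> 'a set \<Rightarrow> bool" where
  "relT imp y x v \<longleftrightarrow> leadsto imp x v \<subseteq> y"

text \<open>\<open>relT' imp u x y\<close> is \<open>uT'xy\<close>.\<close>
definition relT' :: "('a::bounded_lattice \<Rightarrow> 'a \<Rightarrow> 'a) \<Rightarrow> 'a set \<Rightarrow> 'a set \<Rightarrow> 'a set \<Rightarrow> bool" where
  "relT' imp u x y \<longleftrightarrow> (\<forall>v\<in>idealsY. relT imp v x y \<longrightarrow> perp u v)"

text \<open>\<open>rperp U\<close> is \<open>U'\<close>, \<open>lperp V\<close> is \<open>'V\<close>.\<close>
definition rperp :: "'a::bounded_lattice set set \<Rightarrow> 'a set set" where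
  "rperp U = {y\<in>idealsY. \<forall>x\<in>U. perp x y}"

definition lperp :: "'a::bounded_lattice set set \<Rightarrow> 'a set set" where
  "lperp V = {x\<in>filtersX. \<forall>y\<in>V. perp x y}"

definition stable :: "'a::bounded_lattice set set \<Rightarrow> bool" where
  "stable A \<longleftrightarrow> A = lperp (rperp A)"

definition GX :: "'a::bounded_lattice set set set" where
  "GX = {A. stable A}"

definition GInf :: "'a::bounded_lattice set set set \<Rightarrow> 'a set set" where
  "GInf S = filtersX \<inter> \<Inter>S"

definition GSup :: "'a::bounded_lattice set set set \<Rightarrow> 'a set set" where
  "GSup S = lperp (rperp (\<Union>S))"

definition leX :: "'a::bounded_lattice set \<Rightarrow> 'a set \<Rightarrow> bool" where
  "leX u z \<longleftrightarrow> rperp {u} \<subseteq> rperp {z}"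

definition Xa :: "'a::bounded_lattice \<Rightarrow> 'a set set" where
  "Xa a = {x\<in>filtersX. a \<in> x}"

definition Gimp :: "'a::bounded_lattice set set \<Rightarrow> 'a set set \<Rightarrow> 'a set set" where
  "Gimp A C = {u\<in>filtersX. \<forall>z\<in>filtersX. z \<in> A \<and> leX u z \<longrightarrow> z \<in> C}"

definition GimpT :: "('a::bounded_lattice \<Rightarrow> 'a \<Rightarrow> 'a) \<Rightarrow> 'a set set \<Rightarrow> 'a set set \<Rightarrow> 'a set set" where
  "GimpT imp A C = {u\<in>filtersX. \<forall>x\<in>filtersX. \<forall>y\<in>idealsY.
      x \<in> A \<and> (\<forall>c\<in>C. perp c y) \<longrightarrow> relT' imp u x y}"

definition topX :: "'a::bounded_lattice set topology" where
  "topX = topology_generated_by (range Xa)"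

definition KOGX :: "'a::bounded_lattice set set set" where
  "KOGX = {A\<in>GX. openin topX A \<and> compactin topX A}"

definition complete_lattice_on ::
  "'b set set \<Rightarrow> ('b set set \<Rightarrow> 'b set) \<Rightarrow> ('b set set \<Rightarrow> 'b set) \<Rightarrow> bool" where
  "complete_lattice_on L Inf_L Sup_L \<longleftrightarrow>
     (\<forall>S\<subseteq>L. Inf_L S \<in> L \<and> (\<forall>A\<in>S. Inf_L S \<subseteq> A) \<and> (\<forall>B\<in>L. (\<forall>A\<in>S. B \<subseteq> A) \<longrightarrow> B \<subseteq> Inf_L S)) \<and>
     (\<forall>S\<subseteq>L. Sup_L S \<in> L \<and> (\<forall>A\<in>S. A \<subseteq> Sup_L S) \<and> (\<forall>B\<in>L. (\<forall>A\<in>S. A \<subseteq> B) \<longrightarrow> Sup_L S \<subseteq> B))"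

text \<open>Gehrke--Harding canonical extension: \<open>e\<close> is a (bounded) lattice embedding of
the bounded lattice \<open>'a\<close> into the complete lattice \<open>L\<close> which is dense and compact.\<close>
definition canonical_extension ::
  "'b set set \<Rightarrow> ('b set set \<Rightarrow> 'b set) \<Rightarrow> ('b set set \<Rightarrow> 'b set) \<Rightarrow> ('a::bounded_lattice \<Rightarrow> 'b set) \<Rightarrow> bool" where
  "canonical_extension L Inf_L Sup_L e \<longleftrightarrow>
     complete_lattice_on L Inf_L Sup_L \<and>
     range e \<subseteq> L \<and> inj e \<and>
     (\<forall>a b. e (inf a b) = Inf_L {e a, e b}) \<and>
     (\<forall>a b. e (sup a b) = Sup_L {e a, e b}) \<and>
     e bot = Sup_L {} \<and> e top = Inf_L {} \<and>
     (\<forall>A\<in>L. \<exists>\<S>. A = Sup_L {Inf_L (e ` S) | S. S \<in> \<S>}) \<and>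
     (\<forall>A\<in>L. \<exists>\<S>. A = Inf_L {Sup_L (e ` S) | S. S \<in> \<S>}) \<and>
     (\<forall>S T. Inf_L (e ` S) \<subseteq> Sup_L (e ` T) \<longrightarrow>
        (\<exists>S'\<subseteq>S. \<exists>T'\<subseteq>T. finite S' \<and> finite T' \<and> Inf_L (e ` S') \<subseteq> Sup_L (e ` T')))"

end

theory Submission
  imports Defs
begin

(* Stable sets are the Galois-closed sets of the polarity "x and y intersect" between filters
   and ideals; they are up-sets of filters, so G(X) is a complete lattice with intersection as
   meet, and the up-set implication A => C is the residual of intersection.  In a Heyting
   algebra the ideal x ~> y is just the down-set of the implications a -> b with a in x and
   b in y, so u T' x y says that u contains such an implication, and A =>_T C is the polar of the
   ideals x ~> y with x in A and y in C'; in particular it is stable.  Modus ponens inside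
   filters, together with the join of two filters, shows that A => C and A =>_T C coincide.
   For the canonical extension, density holds because a stable set is the join of the sets
   {z. x <= z} for its members x and the meet of the sets {z. z meets y} for y in A'; compactness
   holds because the filter generated by S and the ideal generated by T meet in an element that
   is already generated by finite parts of S and T.  A compact open stable set is covered by
   finitely many basic sets X_b inside it, so it is the X_c for c the join of those b. *)

lemma mem_filtersX [simp]: "x \<in> filtersX \<longleftrightarrow> is_filter x"
  by (simp add: filtersX_def)

lemma mem_idealsY [simp]: "y \<in> idealsY \<longleftrightarrow> is_ideal y"
  by (simp add: idealsY_def)

lemma is_filterI:
  assumes "F \<noteq> {}" "\<And>a b. a \<in> F \<Longrightarrow> a \<le> b \<Longrightarrow> b \<in> F" "\<And>a b. a \<in> F \<Longrightarrow> b \<in> F \<Longrightarrow> inf a b \<in> F"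
  shows "is_filter F"
  unfolding is_filter_def using assms by blast

lemma is_idealI:
  assumes "I \<noteq> {}" "\<And>a b. a \<in> I \<Longrightarrow> b \<le> a \<Longrightarrow> b \<in> I" "\<And>a b. a \<in> I \<Longrightarrow> b \<in> I \<Longrightarrow> sup a b \<in> I"
  shows "is_ideal I"
  unfolding is_ideal_def using assms by blast

lemma is_filter_top: "is_filter F \<Longrightarrow> top \<in> F"
  unfolding is_filter_def by auto

lemma is_filter_upward: "is_filter F \<Longrightarrow> a \<in> F \<Longrightarrow> a \<le> b \<Longrightarrow> b \<in> F"
  unfolding is_filter_def by auto

lemma is_filter_inf_iff: "is_filter F \<Longrightarrow> inf a b \<in> F \<longleftrightarrow> a \<in> F \<and> b \<in> F"
  unfolding is_filter_def by auto

lemma is_ideal_bot: "is_ideal I \<Longrightarrow> bot \<in> I"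
  unfolding is_ideal_def by auto

lemma is_ideal_downward: "is_ideal I \<Longrightarrow> a \<in> I \<Longrightarrow> b \<le> a \<Longrightarrow> b \<in> I"
  unfolding is_ideal_def by auto

lemma is_ideal_sup_iff: "is_ideal I \<Longrightarrow> sup a b \<in> I \<longleftrightarrow> a \<in> I \<and> b \<in> I"
  unfolding is_ideal_def by auto

lemma is_filter_principal: "is_filter {c. a \<le> c}"
  by (rule is_filterI) auto

lemma is_ideal_principal: "is_ideal {c. c \<le> a}"
  by (rule is_idealI) auto

lemma perp_principal_ideal_iff: "is_filter x \<Longrightarrow> perp x {c. c \<le> a} \<longleftrightarrow> a \<in> x"
  unfolding perp_def using is_filter_upward by fastforce

lemma perp_principal_filter_iff: "is_ideal y \<Longrightarrow> perp {c. a \<le> c} y \<longleftrightarrow> a \<in> y"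
  unfolding perp_def using is_ideal_downward by fastforce

lemma is_ideal_ideal_gen: "is_ideal (ideal_gen S)"
proof (rule is_idealI)
  show "ideal_gen S \<noteq> {}"
    using is_ideal_bot unfolding ideal_gen_def by blast
  show "b \<in> ideal_gen S" if "a \<in> ideal_gen S" "b \<le> a" for a b
    using that is_ideal_downward unfolding ideal_gen_def by blast
  show "sup a b \<in> ideal_gen S" if "a \<in> ideal_gen S" "b \<in> ideal_gen S" for a b
    using that is_ideal_sup_iff unfolding ideal_gen_def by blast
qed

lemma subset_ideal_gen: "S \<subseteq> ideal_gen S"
  unfolding ideal_gen_def by auto

lemma ideal_gen_least: "is_ideal I \<Longrightarrow> S \<subseteq> I \<Longrightarrow> ideal_gen S \<subseteq> I"
  unfolding ideal_gen_def by auto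

section \<open>Heyting algebras and the ideals \<open>x \<leadsto> v\<close>\<close>

lemma heyting_residual: "heyting_alg imp \<Longrightarrow> inf x a \<le> b \<longleftrightarrow> x \<le> imp a b"
  unfolding heyting_alg_def by blast

lemma heyting_mp: "heyting_alg imp \<Longrightarrow> inf (imp a b) a \<le> b"
  using heyting_residual by blast

lemma heyting_imp_mono:
  assumes H: "heyting_alg imp" and "a' \<le> a" "b \<le> b'"
  shows "imp a b \<le> imp a' b'"
proof -
  have "inf (imp a b) a' \<le> inf (imp a b) a"
    using assms by (simp add: le_infI2)
  also have "\<dots> \<le> b'"
    using heyting_mp[OF H] assms(3) by (rule order_trans)
  finally show ?thesis
    using heyting_residual[OF H] by blast
qed

lemma filter_mp:
  assumes "heyting_alg imp" "is_filter z" "a \<in> z" "imp a b \<in> z"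
  shows "b \<in> z"
  using assms is_filter_inf_iff is_filter_upward heyting_mp by metis

lemma imp_mem_leadsto: "a \<in> x \<Longrightarrow> b \<in> v \<Longrightarrow> imp a b \<in> leadsto imp x v"
  unfolding leadsto_def by (rule subsetD[OF subset_ideal_gen]) blast

lemma is_ideal_imp_downset:
  assumes H: "heyting_alg imp" and x: "is_filter x" and v: "is_ideal v"
  shows "is_ideal {c. \<exists>a\<in>x. \<exists>b\<in>v. c \<le> imp a b}"
proof (rule is_idealI)
  show "{c. \<exists>a\<in>x. \<exists>b\<in>v. c \<le> imp a b} \<noteq> {}"
    using is_filter_top[OF x] is_ideal_bot[OF v] by blast
  show "d \<in> {c. \<exists>a\<in>x. \<exists>b\<in>v. c \<le> imp a b}"
    if "c \<in> {c. \<exists>a\<in>x. \<exists>b\<in>v. c \<le> imp a b}" "d \<le> c" for c d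
    using that order_trans by blast
next
  fix c1 c2 assume "c1 \<in> {c. \<exists>a\<in>x. \<exists>b\<in>v. c \<le> imp a b}" "c2 \<in> {c. \<exists>a\<in>x. \<exists>b\<in>v. c \<le> imp a b}"
  then obtain a1 b1 a2 b2
    where ab: "a1 \<in> x" "b1 \<in> v" "c1 \<le> imp a1 b1" "a2 \<in> x" "b2 \<in> v" "c2 \<le> imp a2 b2"
    by blast
  have "imp a1 b1 \<le> imp (inf a1 a2) (sup b1 b2)" "imp a2 b2 \<le> imp (inf a1 a2) (sup b1 b2)"
    by (auto intro: heyting_imp_mono[OF H])
  with ab have "sup c1 c2 \<le> imp (inf a1 a2) (sup b1 b2)"
    by (meson le_supI order_trans)
  moreover have "inf a1 a2 \<in> x" "sup b1 b2 \<in> v"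
    using ab is_filter_inf_iff[OF x] is_ideal_sup_iff[OF v] by auto
  ultimately show "sup c1 c2 \<in> {c. \<exists>a\<in>x. \<exists>b\<in>v. c \<le> imp a b}"
    by blast
qed

lemma mem_leadsto_iff:
  assumes H: "heyting_alg imp" and x: "is_filter x" and v: "is_ideal v"
  shows "c \<in> leadsto imp x v \<longleftrightarrow> (\<exists>a\<in>x. \<exists>b\<in>v. c \<le> imp a b)"
proof
  assume "c \<in> leadsto imp x v"
  moreover have "leadsto imp x v \<subseteq> {c. \<exists>a\<in>x. \<exists>b\<in>v. c \<le> imp a b}"
    unfolding leadsto_def by (rule ideal_gen_least[OF is_ideal_imp_downset[OF H x v]]) auto
  ultimately show "\<exists>a\<in>x. \<exists>b\<in>v. c \<le> imp a b"
    by blast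
next
  assume "\<exists>a\<in>x. \<exists>b\<in>v. c \<le> imp a b"
  then obtain a b where "a \<in> x" "b \<in> v" "c \<le> imp a b"
    by blast
  then show "c \<in> leadsto imp x v"
    using imp_mem_leadsto is_ideal_downward[OF is_ideal_ideal_gen] unfolding leadsto_def by blast
qed

lemma relT'_iff_perp_leadsto: "relT' imp u x y \<longleftrightarrow> perp u (leadsto imp x y)"
proof
  assume "relT' imp u x y"
  moreover have "leadsto imp x y \<in> idealsY"
    by (simp add: leadsto_def is_ideal_ideal_gen)
  ultimately show "perp u (leadsto imp x y)"
    unfolding relT'_def relT_def by blast
next
  assume "perp u (leadsto imp x y)"
  then show "relT' imp u x y"
    unfolding relT'_def relT_def perp_def by blast
qed

section \<open>The polarity between filters and ideals\<close>

lemma lperp_antimono: "V \<subseteq> W \<Longrightarrow> lperp W \<subseteq> lperp V"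
  unfolding lperp_def by auto

lemma rperp_antimono: "U \<subseteq> W \<Longrightarrow> rperp W \<subseteq> rperp U"
  unfolding rperp_def by auto

lemma lperp_rperp_mono: "U \<subseteq> W \<Longrightarrow> lperp (rperp U) \<subseteq> lperp (rperp W)"
  by (intro lperp_antimono rperp_antimono)

lemma lperp_subset_filtersX: "lperp V \<subseteq> filtersX"
  unfolding lperp_def by auto

lemma rperp_subset_idealsY: "rperp U \<subseteq> idealsY"
  unfolding rperp_def by auto

lemma mem_rperp_is_ideal: "y \<in> rperp U \<Longrightarrow> is_ideal y"
  unfolding rperp_def by simp

lemma mem_lperp_perp: "x \<in> lperp V \<Longrightarrow> y \<in> V \<Longrightarrow> perp x y"
  unfolding lperp_def by simp

lemma mem_lperp_is_filter: "x \<in> lperp V \<Longrightarrow> is_filter x"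
  unfolding lperp_def by simp

lemma subset_lperp_rperp: "U \<subseteq> filtersX \<Longrightarrow> U \<subseteq> lperp (rperp U)"
  unfolding lperp_def rperp_def perp_def by auto

lemma subset_rperp_lperp: "V \<subseteq> idealsY \<Longrightarrow> V \<subseteq> rperp (lperp V)"
  unfolding lperp_def rperp_def perp_def by auto

lemma stable_lperp:
  assumes "V \<subseteq> idealsY" shows "stable (lperp V)"
  unfolding stable_def
  using subset_lperp_rperp[OF lperp_subset_filtersX] lperp_antimono[OF subset_rperp_lperp[OF assms]]
  by blast

lemma lperp_rperp_stable: "stable A \<Longrightarrow> lperp (rperp A) = A"
  unfolding stable_def by (rule sym)

lemma stable_subset_filtersX: "stable A \<Longrightarrow> A \<subseteq> filtersX"
  unfolding stable_def using lperp_subset_filtersX by metis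

lemma mem_stable_is_filter: "stable A \<Longrightarrow> x \<in> A \<Longrightarrow> is_filter x"
  using stable_subset_filtersX mem_filtersX by blast

lemma lperp_upward: "x \<in> lperp V \<Longrightarrow> is_filter z \<Longrightarrow> x \<subseteq> z \<Longrightarrow> z \<in> lperp V"
  unfolding lperp_def perp_def by fastforce

lemma stable_upward:
  assumes "stable A" "x \<in> A" "is_filter z" "x \<subseteq> z"
  shows "z \<in> A"
proof -
  have "x \<in> lperp (rperp A)"
    using assms(1,2) by (simp add: lperp_rperp_stable)
  then have "z \<in> lperp (rperp A)"
    using assms(3,4) by (rule lperp_upward)
  then show ?thesis
    using assms(1) by (simp add: lperp_rperp_stable)
qed

lemma lperp_Union: "lperp (\<Union>\<V>) = filtersX \<inter> \<Inter>(lperp ` \<V>)"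
  unfolding lperp_def by auto

lemma GInf_eq_lperp:
  assumes "S \<subseteq> GX" shows "GInf S = lperp (\<Union>(rperp ` S))"
proof -
  have "\<Inter>S = (\<Inter>A\<in>S. lperp (rperp A))"
    using assms lperp_rperp_stable unfolding GX_def by auto
  then show ?thesis
    by (simp add: GInf_def lperp_Union image_image)
qed

theorem complete_lattice_GX: "complete_lattice_on GX GInf GSup"
  unfolding complete_lattice_on_def
proof (intro conjI allI impI ballI)
  fix S :: "'a::bounded_lattice set set set" assume S: "S \<subseteq> GX"
  have "\<Union>(rperp ` S) \<subseteq> idealsY"
    using rperp_subset_idealsY by blast
  then show "GInf S \<in> GX"
    unfolding GInf_eq_lperp[OF S] GX_def by (simp add: stable_lperp)
  show "\<And>A. A \<in> S \<Longrightarrow> GInf S \<subseteq> A"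
    unfolding GInf_def by auto
  show "\<And>B. B \<in> GX \<Longrightarrow> \<forall>A\<in>S. B \<subseteq> A \<Longrightarrow> B \<subseteq> GInf S"
    unfolding GInf_def GX_def using stable_subset_filtersX by auto
  show "GSup S \<in> GX"
    unfolding GSup_def GX_def by (simp add: stable_lperp rperp_subset_idealsY)
  have "\<Union>S \<subseteq> filtersX"
    using S stable_subset_filtersX unfolding GX_def by auto
  then show "\<And>A. A \<in> S \<Longrightarrow> A \<subseteq> GSup S"
    unfolding GSup_def using subset_lperp_rperp by blast
  show "GSup S \<subseteq> B" if "B \<in> GX" "\<forall>A\<in>S. A \<subseteq> B" for B
    using that lperp_rperp_mono[of "\<Union>S" B] lperp_rperp_stable[of B]
    unfolding GSup_def GX_def by auto
qed

section \<open>Implication on stable sets\<close>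

definition filter_join :: "'a::bounded_lattice set \<Rightarrow> 'a set \<Rightarrow> 'a set" where
  "filter_join w z = {c. \<exists>p\<in>w. \<exists>q\<in>z. inf p q \<le> c}"

lemma is_filter_filter_join:
  assumes w: "is_filter w" and z: "is_filter z"
  shows "is_filter (filter_join w z)"
proof (rule is_filterI)
  show "filter_join w z \<noteq> {}"
    using is_filter_top[OF w] is_filter_top[OF z] unfolding filter_join_def by blast
  show "b \<in> filter_join w z" if "a \<in> filter_join w z" "a \<le> b" for a b
    using that order_trans unfolding filter_join_def by blast
next
  fix a b assume "a \<in> filter_join w z" "b \<in> filter_join w z"
  then obtain p1 q1 p2 q2
    where pq: "p1 \<in> w" "q1 \<in> z" "inf p1 q1 \<le> a" "p2 \<in> w" "q2 \<in> z" "inf p2 q2 \<le> b"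
    unfolding filter_join_def by blast
  moreover have "inf (inf p1 p2) (inf q1 q2) \<le> inf p1 q1" "inf (inf p1 p2) (inf q1 q2) \<le> inf p2 q2"
    by (simp_all add: inf.coboundedI1 inf.coboundedI2 le_infI1 le_infI2)
  ultimately have "inf (inf p1 p2) (inf q1 q2) \<le> inf a b"
    by (meson le_inf_iff order_trans)
  moreover have "inf p1 p2 \<in> w" "inf q1 q2 \<in> z"
    using pq is_filter_inf_iff[OF w] is_filter_inf_iff[OF z] by auto
  ultimately show "inf a b \<in> filter_join w z"
    unfolding filter_join_def by blast
qed

lemma filter_join_upper1:
  assumes "is_filter z" shows "w \<subseteq> filter_join w z"
proof
  fix p assume "p \<in> w"
  moreover have "inf p top \<le> p" "top \<in> z"
    using is_filter_top[OF assms] by simp_all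
  ultimately show "p \<in> filter_join w z"
    unfolding filter_join_def by blast
qed

lemma filter_join_upper2:
  assumes "is_filter w" shows "z \<subseteq> filter_join w z"
proof
  fix q assume "q \<in> z"
  moreover have "inf top q \<le> q" "top \<in> w"
    using is_filter_top[OF assms] by simp_all
  ultimately show "q \<in> filter_join w z"
    unfolding filter_join_def by blast
qed

lemma leX_iff_subset: "is_filter z \<Longrightarrow> leX u z \<longleftrightarrow> u \<subseteq> z"
proof
  assume z: "is_filter z" and "leX u z"
  show "u \<subseteq> z"
  proof
    fix a assume "a \<in> u"
    then have "{c. c \<le> a} \<in> rperp {u}"
      unfolding rperp_def perp_def using is_ideal_principal by auto
    with \<open>leX u z\<close> have "perp z {c. c \<le> a}"
      unfolding leX_def rperp_def by auto
    then show "a \<in> z"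
      using perp_principal_ideal_iff[OF z] by blast
  qed
next
  assume "u \<subseteq> z"
  then show "leX u z"
    unfolding leX_def rperp_def perp_def by auto
qed

lemma mem_Gimp_is_filter: "u \<in> Gimp A C \<Longrightarrow> is_filter u"
  unfolding Gimp_def by simp

lemma Gimp_filter_join_mem:
  assumes A: "stable A" and u: "u \<in> Gimp A C" and x: "x \<in> A"
  shows "filter_join u x \<in> C"
proof -
  have "is_filter u" "is_filter x"
    using mem_Gimp_is_filter[OF u] mem_stable_is_filter[OF A x] .
  then have "is_filter (filter_join u x)" "u \<subseteq> filter_join u x" "x \<subseteq> filter_join u x"
    by (simp_all add: is_filter_filter_join filter_join_upper1 filter_join_upper2)
  moreover from this have "filter_join u x \<in> A"
    using stable_upward[OF A x] by blast
  ultimately show ?thesis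
    using u leX_iff_subset[of "filter_join u x" u] unfolding Gimp_def by simp
qed

lemma Gimp_residual:
  assumes "stable B"
  shows "B \<inter> A \<subseteq> C \<longleftrightarrow> B \<subseteq> Gimp A C"
proof
  assume BAC: "B \<inter> A \<subseteq> C"
  show "B \<subseteq> Gimp A C"
    unfolding Gimp_def
  proof (intro subsetI CollectI conjI ballI impI)
    fix u z assume u: "u \<in> B" and z: "z \<in> filtersX" "z \<in> A \<and> leX u z"
    then have "u \<subseteq> z"
      using leX_iff_subset[of z u] by simp
    then have "z \<in> B"
      using stable_upward[OF assms u] z(1) by simp
    with z BAC show "z \<in> C"
      by blast
  qed (simp add: mem_stable_is_filter[OF assms])
next
  assume "B \<subseteq> Gimp A C"
  then show "B \<inter> A \<subseteq> C"
    unfolding Gimp_def leX_def by auto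
qed

lemma Gimp_perp_leadsto:
  assumes H: "heyting_alg imp" and A: "stable A"
    and u: "u \<in> Gimp A C" and x: "x \<in> A" and y: "y \<in> rperp C"
  shows "perp u (leadsto imp x y)"
proof -
  have "perp (filter_join u x) y"
    using Gimp_filter_join_mem[OF A u x] y unfolding rperp_def by blast
  moreover have "is_ideal y"
    using y by (rule mem_rperp_is_ideal)
  ultimately obtain p q where pq: "p \<in> u" "q \<in> x" "inf p q \<in> y"
    unfolding perp_def filter_join_def using is_ideal_downward by blast
  have "p \<le> imp q (inf p q)"
    using heyting_residual[OF H] by blast
  then have "imp q (inf p q) \<in> u"
    using pq(1) is_filter_upward mem_Gimp_is_filter[OF u] by blast
  with pq(2,3) show ?thesis
    using imp_mem_leadsto unfolding perp_def by blast
qed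

lemma Gimp_eq_lperp_leadsto:
  assumes H: "heyting_alg imp" and A: "stable A" and C: "stable C"
  shows "Gimp A C = lperp {leadsto imp x y | x y. x \<in> filtersX \<and> x \<in> A \<and> y \<in> rperp C}"
proof (intro equalityI subsetI)
  fix u assume u: "u \<in> Gimp A C"
  then have "perp u (leadsto imp x y)" if "x \<in> A" "y \<in> rperp C" for x y
    using Gimp_perp_leadsto[OF H A] that by blast
  then show "u \<in> lperp {leadsto imp x y | x y. x \<in> filtersX \<and> x \<in> A \<and> y \<in> rperp C}"
    using mem_Gimp_is_filter[OF u] unfolding lperp_def mem_Collect_eq mem_filtersX by blast
next
  fix u assume u: "u \<in> lperp {leadsto imp x y | x y. x \<in> filtersX \<and> x \<in> A \<and> y \<in> rperp C}"
  have "z \<in> C" if z: "is_filter z" "z \<in> A" "u \<subseteq> z" for z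
  proof -
    have "perp z y" if y: "y \<in> rperp C" for y
    proof -
      have "perp u (leadsto imp z y)"
        by (rule mem_lperp_perp[OF u]) (use z y in auto)
      moreover have "is_ideal y"
        using y by (rule mem_rperp_is_ideal)
      ultimately obtain a b where "a \<in> z" "b \<in> y" "imp a b \<in> u"
        using mem_leadsto_iff[OF H z(1)] is_filter_upward mem_lperp_is_filter[OF u]
        unfolding perp_def by blast
      then have "b \<in> z"
        using filter_mp[OF H z(1)] z(3) by blast
      with \<open>b \<in> y\<close> show ?thesis
        unfolding perp_def by blast
    qed
    then have "z \<in> lperp (rperp C)"
      using z(1) unfolding lperp_def by simp
    then show ?thesis
      using C by (simp add: lperp_rperp_stable)
  qed
  then show "u \<in> Gimp A C"
    using mem_lperp_is_filter[OF u] unfolding Gimp_def by (auto simp: leX_iff_subset)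
qed

lemma GimpT_eq_lperp_leadsto:
  "GimpT imp A C = lperp {leadsto imp x y | x y. x \<in> filtersX \<and> x \<in> A \<and> y \<in> rperp C}"
  unfolding GimpT_def lperp_def rperp_def relT'_iff_perp_leadsto by blast

lemma stable_GimpT: "stable (GimpT imp A C)"
  unfolding GimpT_eq_lperp_leadsto
  by (rule stable_lperp) (auto simp: leadsto_def is_ideal_ideal_gen)

lemma Gimp_eq_GimpT:
  assumes "heyting_alg imp" "stable A" "stable C"
  shows "Gimp A C = GimpT imp A C"
  unfolding Gimp_eq_lperp_leadsto[OF assms] GimpT_eq_lperp_leadsto ..

section \<open>The embedding \<open>a \<mapsto> X\<^sub>a\<close>\<close>

lemma principal_filter_mem_Xa: "{c. a \<le> c} \<in> Xa b \<longleftrightarrow> a \<le> b"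
  unfolding Xa_def using is_filter_principal by auto

lemma Xa_eq_lperp: "Xa a = lperp {y \<in> idealsY. a \<in> y}"
proof (intro equalityI subsetI)
  fix x assume "x \<in> Xa a"
  then show "x \<in> lperp {y \<in> idealsY. a \<in> y}"
    unfolding Xa_def lperp_def perp_def by auto
next
  fix x assume x: "x \<in> lperp {y \<in> idealsY. a \<in> y}"
  then have "is_filter x"
    by (rule mem_lperp_is_filter)
  moreover have "perp x {c. c \<le> a}"
    using x by (rule mem_lperp_perp) (simp add: is_ideal_principal)
  ultimately show "x \<in> Xa a"
    unfolding Xa_def by (simp add: perp_principal_ideal_iff)
qed

lemma stable_Xa: "stable (Xa a)"
  unfolding Xa_eq_lperp by (rule stable_lperp) auto

lemma Xa_imp:
  assumes H: "heyting_alg imp"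
  shows "Xa (imp a b) = Gimp (Xa a) (Xa b)"
proof (intro equalityI subsetI)
  fix u assume u: "u \<in> Xa (imp a b)"
  have "b \<in> z" if "is_filter z" "a \<in> z" "u \<subseteq> z" for z
    using filter_mp[OF H] u that unfolding Xa_def by blast
  then show "u \<in> Gimp (Xa a) (Xa b)"
    using u unfolding Gimp_def Xa_def by (auto simp: leX_iff_subset)
next
  fix u assume u: "u \<in> Gimp (Xa a) (Xa b)"
  have "{c. a \<le> c} \<in> Xa a"
    by (simp add: principal_filter_mem_Xa)
  then have "filter_join u {c. a \<le> c} \<in> Xa b"
    by (rule Gimp_filter_join_mem[OF stable_Xa u])
  then obtain p q where "p \<in> u" "a \<le> q" "inf p q \<le> b"
    unfolding Xa_def filter_join_def by blast
  then have "inf p a \<le> b"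
    by (meson inf_mono order_refl order_trans)
  then have "imp a b \<in> u"
    using heyting_residual[OF H] is_filter_upward mem_Gimp_is_filter[OF u] \<open>p \<in> u\<close> by blast
  then show "u \<in> Xa (imp a b)"
    using mem_Gimp_is_filter[OF u] unfolding Xa_def by simp
qed

lemma Xa_inf: "Xa (inf a b) = GInf {Xa a, Xa b}"
  unfolding GInf_def Xa_def using is_filter_inf_iff by auto

lemma Xa_top: "Xa top = GInf {}"
  unfolding GInf_def Xa_def using is_filter_top by auto

lemma inj_Xa: "inj Xa"
proof (rule injI)
  fix a b :: "'a::bounded_lattice" assume "Xa a = Xa b"
  then show "a = b"
    using principal_filter_mem_Xa[of a] principal_filter_mem_Xa[of b]
    by (metis order.antisym order_refl)
qed

lemma GInf_Xa_image: "GInf (Xa ` S) = {x \<in> filtersX. S \<subseteq> x}"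
  unfolding GInf_def Xa_def by auto

lemma rperp_Union_Xa: "rperp (\<Union>(Xa ` T)) = {y \<in> idealsY. T \<subseteq> y}"
proof (intro equalityI subsetI)
  fix y assume y: "y \<in> rperp (\<Union>(Xa ` T))"
  have "t \<in> y" if "t \<in> T" for t
  proof -
    have "{c. t \<le> c} \<in> \<Union>(Xa ` T)"
      using that principal_filter_mem_Xa by blast
    then have "perp {c. t \<le> c} y"
      using y unfolding rperp_def by blast
    then show ?thesis
      using perp_principal_filter_iff[OF mem_rperp_is_ideal[OF y]] by blast
  qed
  then show "y \<in> {y \<in> idealsY. T \<subseteq> y}"
    using mem_rperp_is_ideal[OF y] by auto
next
  fix y assume "y \<in> {y \<in> idealsY. T \<subseteq> y}"
  then show "y \<in> rperp (\<Union>(Xa ` T))"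
    unfolding rperp_def Xa_def perp_def by auto
qed

lemma GSup_Xa_image: "GSup (Xa ` T) = lperp {y \<in> idealsY. T \<subseteq> y}"
  unfolding GSup_def rperp_Union_Xa ..

lemma GSup_Xa_image_eq_Xa:
  assumes "\<And>y. is_ideal y \<Longrightarrow> T \<subseteq> y \<longleftrightarrow> c \<in> y"
  shows "GSup (Xa ` T) = Xa c"
proof -
  have "{y \<in> idealsY. T \<subseteq> y} = {y \<in> idealsY. c \<in> y}"
    using assms by auto
  then show ?thesis
    unfolding GSup_Xa_image Xa_eq_lperp by simp
qed

lemma Xa_sup: "Xa (sup a b) = GSup {Xa a, Xa b}"
proof -
  have "GSup (Xa ` {a, b}) = Xa (sup a b)"
    by (rule GSup_Xa_image_eq_Xa) (simp add: is_ideal_sup_iff)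
  then show ?thesis
    by simp
qed

lemma Xa_bot: "Xa (bot::'a::bounded_lattice) = GSup {}"
proof -
  have "GSup (Xa ` {}) = Xa (bot::'a)"
    by (rule GSup_Xa_image_eq_Xa) (simp add: is_ideal_bot)
  then show ?thesis
    by simp
qed

lemma GX_eq_GSup_GInf_Xa:
  assumes "A \<in> GX" shows "A = GSup {GInf (Xa ` x) | x. x \<in> A}"
proof -
  have A: "stable A"
    using assms unfolding GX_def by simp
  have "\<Union>{GInf (Xa ` x) | x. x \<in> A} = A"
  proof (intro equalityI subsetI)
    fix z assume "z \<in> \<Union>{GInf (Xa ` x) | x. x \<in> A}"
    then obtain x where "x \<in> A" "z \<in> GInf (Xa ` x)"
      by blast
    then show "z \<in> A"
      unfolding GInf_Xa_image using stable_upward[OF A] by simp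
  next
    fix x assume "x \<in> A"
    then have "x \<in> GInf (Xa ` x)"
      unfolding GInf_Xa_image using mem_stable_is_filter[OF A] by simp
    with \<open>x \<in> A\<close> show "x \<in> \<Union>{GInf (Xa ` x) | x. x \<in> A}"
      by blast
  qed
  then show ?thesis
    unfolding GSup_def using lperp_rperp_stable[OF A] by simp
qed

lemma GSup_Xa_ideal:
  assumes "is_ideal y" shows "GSup (Xa ` y) = lperp {y}"
  unfolding GSup_Xa_image
proof (rule equalityI)
  show "lperp {y' \<in> idealsY. y \<subseteq> y'} \<subseteq> lperp {y}"
    by (rule lperp_antimono) (simp add: assms)
  show "lperp {y} \<subseteq> lperp {y' \<in> idealsY. y \<subseteq> y'}"
    unfolding lperp_def perp_def by fastforce
qed

lemma GX_eq_GInf_GSup_Xa: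
  assumes "A \<in> GX" shows "A = GInf {GSup (Xa ` y) | y. y \<in> rperp A}"
proof -
  have A: "stable A"
    using assms unfolding GX_def by simp
  have "{GSup (Xa ` y) | y. y \<in> rperp A} = (\<lambda>y. lperp {y}) ` rperp A"
    unfolding Setcompr_eq_image
    by (rule image_cong) (simp_all add: GSup_Xa_ideal mem_rperp_is_ideal)
  moreover have "GInf ((\<lambda>y. lperp {y}) ` rperp A) = lperp (rperp A)"
    unfolding GInf_def lperp_def by auto
  ultimately show ?thesis
    using lperp_rperp_stable[OF A] by simp
qed

(* For P = is_filter (is_ideal) this is the filter (ideal) generated by S, written so that
   every member is witnessed by a finite part of S. *)
definition finitary_hull :: "('a set \<Rightarrow> bool) \<Rightarrow> 'a set \<Rightarrow> 'a set" where
  "finitary_hull P S = {c. \<exists>S'\<subseteq>S. finite S' \<and> (\<forall>F. P F \<and> S' \<subseteq> F \<longrightarrow> c \<in> F)}"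

lemma subset_finitary_hull: "S \<subseteq> finitary_hull P S"
  unfolding finitary_hull_def by blast

lemma finitary_hull_closed:
  assumes "finite B" "B \<subseteq> finitary_hull P S" "\<And>F. P F \<Longrightarrow> B \<subseteq> F \<Longrightarrow> c \<in> F"
  shows "c \<in> finitary_hull P S"
proof -
  have "\<forall>b\<in>B. \<exists>S'. S' \<subseteq> S \<and> finite S' \<and> (\<forall>F. P F \<and> S' \<subseteq> F \<longrightarrow> b \<in> F)"
    using assms(2) unfolding finitary_hull_def by blast
  then obtain f where f: "\<forall>b\<in>B. f b \<subseteq> S \<and> finite (f b) \<and> (\<forall>F. P F \<and> f b \<subseteq> F \<longrightarrow> b \<in> F)"
    by (rule bchoice[THEN exE])
  then have "\<Union>(f ` B) \<subseteq> S" "finite (\<Union>(f ` B))"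
    using assms(1) by auto
  moreover have "c \<in> F" if "P F" "\<Union>(f ` B) \<subseteq> F" for F
    using assms(3) f that by blast
  ultimately show ?thesis
    unfolding finitary_hull_def by blast
qed

lemma is_filter_finitary_hull: "is_filter (finitary_hull is_filter S)"
proof (rule is_filterI)
  have "top \<in> finitary_hull is_filter S"
    by (rule finitary_hull_closed[of "{}"]) (auto simp: is_filter_top)
  then show "finitary_hull is_filter S \<noteq> {}"
    by blast
  show "b \<in> finitary_hull is_filter S" if "a \<in> finitary_hull is_filter S" "a \<le> b" for a b
    by (rule finitary_hull_closed[of "{a}"]) (use that is_filter_upward in auto)
  show "inf a b \<in> finitary_hull is_filter S"
    if "a \<in> finitary_hull is_filter S" "b \<in> finitary_hull is_filter S" for a b
    by (rule finitary_hull_closed[of "{a, b}"]) (use that is_filter_inf_iff in auto)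
qed

lemma is_ideal_finitary_hull: "is_ideal (finitary_hull is_ideal S)"
proof (rule is_idealI)
  have "bot \<in> finitary_hull is_ideal S"
    by (rule finitary_hull_closed[of "{}"]) (auto simp: is_ideal_bot)
  then show "finitary_hull is_ideal S \<noteq> {}"
    by blast
  show "b \<in> finitary_hull is_ideal S" if "a \<in> finitary_hull is_ideal S" "b \<le> a" for a b
    by (rule finitary_hull_closed[of "{a}"]) (use that is_ideal_downward in auto)
  show "sup a b \<in> finitary_hull is_ideal S"
    if "a \<in> finitary_hull is_ideal S" "b \<in> finitary_hull is_ideal S" for a b
    by (rule finitary_hull_closed[of "{a, b}"]) (use that is_ideal_sup_iff in auto)
qed

lemma GInf_Xa_subset_GSup_Xa_compact:
  assumes "GInf (Xa ` S) \<subseteq> GSup (Xa ` T)"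
  shows "\<exists>S'\<subseteq>S. \<exists>T'\<subseteq>T. finite S' \<and> finite T' \<and> GInf (Xa ` S') \<subseteq> GSup (Xa ` T')"
proof -
  have "finitary_hull is_filter S \<in> GInf (Xa ` S)"
    unfolding GInf_Xa_image using is_filter_finitary_hull subset_finitary_hull[of S] by auto
  with assms have "finitary_hull is_filter S \<in> lperp {y \<in> idealsY. T \<subseteq> y}"
    unfolding GSup_Xa_image by blast
  moreover have "finitary_hull is_ideal T \<in> {y \<in> idealsY. T \<subseteq> y}"
    using is_ideal_finitary_hull subset_finitary_hull[of T] by auto
  ultimately have "perp (finitary_hull is_filter S) (finitary_hull is_ideal T)"
    by (rule mem_lperp_perp)
  then obtain c S' T' where c: "S' \<subseteq> S" "finite S'" "\<forall>F. is_filter F \<and> S' \<subseteq> F \<longrightarrow> c \<in> F"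
    "T' \<subseteq> T" "finite T'" "\<forall>I. is_ideal I \<and> T' \<subseteq> I \<longrightarrow> c \<in> I"
    unfolding perp_def finitary_hull_def by blast
  then have "GInf (Xa ` S') \<subseteq> GSup (Xa ` T')"
    unfolding GInf_Xa_image GSup_Xa_image lperp_def perp_def by auto
  with c show ?thesis
    by blast
qed

theorem canonical_extension_GX:
  "canonical_extension GX GInf GSup (Xa :: 'a::bounded_lattice \<Rightarrow> 'a set set)"
  unfolding canonical_extension_def
proof (intro conjI allI impI ballI)
  show "complete_lattice_on GX GInf GSup"
    by (rule complete_lattice_GX)
  show "range Xa \<subseteq> GX"
    using stable_Xa unfolding GX_def by auto
  show "inj Xa"
    by (rule inj_Xa)
  show "Xa (inf a b) = GInf {Xa a, Xa b}" "Xa (sup a b) = GSup {Xa a, Xa b}" for a b :: 'a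
    by (rule Xa_inf Xa_sup)+
  show "Xa (bot::'a) = GSup {}" "Xa (top::'a) = GInf {}"
    by (rule Xa_bot Xa_top)+
  show "\<exists>\<S>. A = GSup {GInf (Xa ` S) | S. S \<in> \<S>}" "\<exists>\<S>. A = GInf {GSup (Xa ` S) | S. S \<in> \<S>}"
    if "A \<in> GX" for A :: "'a set set"
    using GX_eq_GSup_GInf_Xa[OF that] GX_eq_GInf_GSup_Xa[OF that] by blast+
  show "GInf (Xa ` S) \<subseteq> GSup (Xa ` T) \<Longrightarrow>
      \<exists>S'\<subseteq>S. \<exists>T'\<subseteq>T. finite S' \<and> finite T' \<and> GInf (Xa ` S') \<subseteq> GSup (Xa ` T')" for S T :: "'a set"
    by (rule GInf_Xa_subset_GSup_Xa_compact)
qed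

section \<open>Compact open stable sets\<close>

lemma openin_topX: "openin topX U \<longleftrightarrow> generate_topology_on (range Xa) U"
  unfolding topX_def by (rule openin_topology_generated_by_iff)

lemma topspace_topX: "topspace topX = (filtersX :: 'a::bounded_lattice set set)"
proof -
  have "Xa (top :: 'a) = filtersX"
    using Xa_top unfolding GInf_def by simp
  then have "\<Union>(range (Xa :: 'a \<Rightarrow> 'a set set)) = filtersX"
    unfolding Xa_def by blast
  then show ?thesis
    unfolding topX_def by simp
qed

lemma Xa_mono: "a \<le> b \<Longrightarrow> Xa a \<subseteq> Xa b"
  unfolding Xa_def using is_filter_upward by auto

lemma generate_topology_on_Xa_nhd:
  assumes "generate_topology_on (range Xa) U" "x \<in> U" "is_filter x"
  shows "\<exists>a\<in>x. Xa a \<subseteq> U"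
  using assms
proof (induction arbitrary: x rule: generate_topology_on.induct)
  case Empty
  then show ?case
    by simp
next
  case (Int U V)
  then obtain a b where "a \<in> x" "Xa a \<subseteq> U" "b \<in> x" "Xa b \<subseteq> V"
    by blast
  moreover have "Xa (inf a b) \<subseteq> Xa a" "Xa (inf a b) \<subseteq> Xa b"
    by (simp_all add: Xa_mono)
  moreover have "inf a b \<in> x"
    using is_filter_inf_iff[OF Int.prems(2)] calculation by blast
  ultimately show ?case
    by blast
next
  case (UN K)
  then obtain U where "U \<in> K" "x \<in> U"
    by blast
  with UN.IH UN.prems(2) show ?case
    by blast
next
  case (Basis U)
  then show ?case
    unfolding Xa_def by blast
qed

lemma Xa_in_KOGX: "Xa a \<in> KOGX"
proof -
  have "openin topX (Xa a)"
    unfolding openin_topX by (rule generate_topology_on.Basis) simp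
  moreover have "compactin topX (Xa a)"
    unfolding compactin_def
  proof (intro conjI allI impI)
    show "Xa a \<subseteq> topspace topX"
      unfolding topspace_topX Xa_def by auto
    fix \<U> assume \<U>: "(\<forall>U\<in>\<U>. openin topX U) \<and> Xa a \<subseteq> \<Union>\<U>"
    \<comment> \<open>\<open>X\<^sub>a\<close> has the least element \<open>{c. a \<le> c}\<close>, and open sets are up-sets\<close>
    have "{c. a \<le> c} \<in> Xa a"
      by (simp add: principal_filter_mem_Xa)
    then obtain U where U: "U \<in> \<U>" "{c. a \<le> c} \<in> U"
      using \<U> by blast
    then obtain b where "a \<le> b" "Xa b \<subseteq> U"
      using generate_topology_on_Xa_nhd[of U] \<U> is_filter_principal openin_topX by fastforce
    then have "Xa a \<subseteq> U"
      using Xa_mono by blast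
    with U(1) show "\<exists>\<F>. finite \<F> \<and> \<F> \<subseteq> \<U> \<and> Xa a \<subseteq> \<Union>\<F>"
      by (intro exI[of _ "{U}"]) auto
  qed
  ultimately show ?thesis
    using stable_Xa unfolding KOGX_def GX_def by blast
qed

lemma finite_join_exists: "finite T \<Longrightarrow> \<exists>c. \<forall>y. is_ideal y \<longrightarrow> (T \<subseteq> y \<longleftrightarrow> c \<in> y)"
proof (induction rule: finite_induct)
  case empty
  then show ?case
    using is_ideal_bot by blast
next
  case (insert t T)
  then obtain c where "\<forall>y. is_ideal y \<longrightarrow> (T \<subseteq> y \<longleftrightarrow> c \<in> y)"
    by blast
  then have "\<forall>y. is_ideal y \<longrightarrow> (insert t T \<subseteq> y \<longleftrightarrow> sup t c \<in> y)"
    using is_ideal_sup_iff by auto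
  then show ?case
    by blast
qed

lemma KOGX_finite_Xa_cover:
  assumes "A \<in> KOGX"
  obtains B where "finite B" "\<And>b. b \<in> B \<Longrightarrow> Xa b \<subseteq> A" "A \<subseteq> \<Union>(Xa ` B)"
proof -
  have A: "stable A" and "openin topX A" "compactin topX A"
    using assms unfolding KOGX_def GX_def by auto
  let ?\<U> = "Xa ` {b. Xa b \<subseteq> A}"
  have "\<forall>U\<in>?\<U>. openin topX U"
    unfolding openin_topX by (auto intro: generate_topology_on.Basis)
  moreover have "A \<subseteq> \<Union>?\<U>"
  proof
    fix x assume x: "x \<in> A"
    then obtain b where "b \<in> x" "Xa b \<subseteq> A"
      using generate_topology_on_Xa_nhd \<open>openin topX A\<close> mem_stable_is_filter[OF A]
      unfolding openin_topX by blast
    then show "x \<in> \<Union>?\<U>"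
      using mem_stable_is_filter[OF A x] unfolding Xa_def by auto
  qed
  ultimately obtain \<F> where "finite \<F>" "\<F> \<subseteq> ?\<U>" "A \<subseteq> \<Union>\<F>"
    using \<open>compactin topX A\<close> unfolding compactin_def by meson
  then obtain B where B: "B \<subseteq> {b. Xa b \<subseteq> A}" "finite B" "A \<subseteq> \<Union>(Xa ` B)"
    by (metis finite_subset_image)
  show ?thesis
  proof (rule that)
    show "finite B" "A \<subseteq> \<Union>(Xa ` B)"
      using B(2,3) .
    show "Xa b \<subseteq> A" if "b \<in> B" for b
      using B(1) that by blast
  qed
qed

lemma GSup_Xa_image_eq_stable:
  assumes A: "stable A" and "\<And>b. b \<in> B \<Longrightarrow> Xa b \<subseteq> A" "A \<subseteq> \<Union>(Xa ` B)"
  shows "GSup (Xa ` B) = A"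
proof
  have "\<Union>(Xa ` B) \<subseteq> A"
    using assms(2) by blast
  then have "lperp (rperp (\<Union>(Xa ` B))) \<subseteq> lperp (rperp A)"
    by (rule lperp_rperp_mono)
  then show "GSup (Xa ` B) \<subseteq> A"
    unfolding GSup_def using lperp_rperp_stable[OF A] by simp
  have "\<Union>(Xa ` B) \<subseteq> filtersX"
    unfolding Xa_def by auto
  then show "A \<subseteq> GSup (Xa ` B)"
    unfolding GSup_def using assms(3) subset_lperp_rperp by blast
qed

lemma KOGX_subset_range_Xa:
  assumes "A \<in> KOGX" shows "A \<in> range Xa"
proof -
  have A: "stable A"
    using assms unfolding KOGX_def GX_def by simp
  obtain B where B: "finite B" "\<And>b. b \<in> B \<Longrightarrow> Xa b \<subseteq> A" "A \<subseteq> \<Union>(Xa ` B)"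
    using KOGX_finite_Xa_cover[OF assms] by blast
  obtain c where "\<forall>y. is_ideal y \<longrightarrow> (B \<subseteq> y \<longleftrightarrow> c \<in> y)"
    using finite_join_exists[OF B(1)] by blast
  then have "GSup (Xa ` B) = Xa c"
    by (intro GSup_Xa_image_eq_Xa) blast
  moreover have "GSup (Xa ` B) = A"
    using GSup_Xa_image_eq_stable[OF A] B(2,3) by blast
  ultimately show ?thesis
    by (metis rangeI)
qed

lemma range_Xa_eq_KOGX: "range Xa = KOGX"
  using Xa_in_KOGX KOGX_subset_range_Xa by blast

theorem corollary4p6:
  fixes imp :: "'a::bounded_lattice \<Rightarrow> 'a \<Rightarrow> 'a"
  assumes "heyting_alg imp"
  shows "complete_lattice_on (GX :: 'a set set set) GInf GSup
    \<and> (\<forall>A\<in>(GX :: 'a set set set). \<forall>C\<in>GX. Gimp A C \<in> GX \<and> (\<forall>B\<in>GX. B \<inter> A \<subseteq> C \<longleftrightarrow> B \<subseteq> Gimp A C))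
    \<and> (\<forall>A\<in>(GX :: 'a set set set). \<forall>C\<in>GX. Gimp A C = GimpT imp A C)
    \<and> canonical_extension GX GInf GSup (Xa :: 'a \<Rightarrow> 'a set set)
    \<and> range Xa = KOGX
    \<and> (\<forall>a b. Xa (imp a b) = Gimp (Xa a) (Xa b))"
proof (intro conjI ballI allI)
  fix A C :: "'a set set" assume "A \<in> GX" "C \<in> GX"
  then have A: "stable A" and C: "stable C"
    unfolding GX_def by simp_all
  show Gimp_eq: "Gimp A C = GimpT imp A C"
    by (rule Gimp_eq_GimpT[OF assms A C])
  show "Gimp A C \<in> GX"
    unfolding Gimp_eq GX_def using stable_GimpT by simp
  show "B \<inter> A \<subseteq> C \<longleftrightarrow> B \<subseteq> Gimp A C" if "B \<in> GX" for B
    using that Gimp_residual unfolding GX_def by simp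
qed (simp_all add: complete_lattice_GX canonical_extension_GX range_Xa_eq_KOGX Xa_imp[OF assms])

end
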